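(* There exists $r'>0$ such that for every $0<r\le r'$ there exists $p'>0$ with $$\sum_{T\in\bar{\mathcal T}_0}\mathbb P\big[T\text{ is present in }(\Lambda,\mathcal H^{p,r},h)\big]=\infty\qquad\text{for all }0<p\le p'.$$
   Context: $\Lambda=\mathbb Z^3$ with addition, height function $h(i)=-i_3$. Define $\mathrm A_{1,1}=\{(0,1),(1,0)\}$, $\mathrm A_{2,1}=\{(-1,1),(0,0),(1,-1)\}$, $\mathrm A_{1,2}=\mathrm A_{2,2}=\{(0,0)\}$ in $\mathbb Z^2$ and $A_{s,k}:=\{(i_1,i_2,-1):(i_1,i_2)\in\mathrm A_{s,k}\}$. For $p,r\in[0,1]$ let $(\mu(i))_{i\in\Lambda}$ be i.i.d. in $\{0,1,2\}$ with $\mathbb P[\mu=0]=p$, $\mathbb P[\mu=1]=(1-p)r$, $\mathbb P[\mu=2]=(1-p)(1-r)$. Let $\Lambda_0:=\{i:\mu(i)=0\}$ and $\vec H_s:=\{(i,i+j):\mu(i)\ne0,\ j\in A_{s,\mu(i)}\}$ for $s=1,2$ (this random typed graph is $\mathcal H^{p,r}$; it corresponds to applying the zero map, $x\mapsto\bigvee_s\bigwedge_{j\in A_{s,1}}x(i+j)$, or the identity $x\mapsto x(i+(0,0,-1))$). Height cycle: $n\in\{0,2,4,\dots\}$ and $\psi:\{0,\dots,n\}\to\Lambda$ with $\psi_0=\psi_n$ and, writing $\nabla_v:=h(\psi_v)-h(\psi_{v-1})$, $\nabla_1=1$, $\nabla_n=-1$, $\nabla_v\in\{-1,1\}$ for $1<v<n$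 (when $n\ge2$). Let $V'_\circ:=\{0<v<n:\nabla_v=-1,\nabla_{v+1}=1\}$, $V'_\ast:=\{0<v<n:\nabla_v=1,\nabla_{v+1}=-1\}$, $V'_1:=\{0<v<n:\nabla_v=\nabla_{v+1}=1\}\cup\{0\}$, $V'_2:=\{0<v<n:\nabla_v=\nabla_{v+1}=-1\}\cup\{n\}$ (for $n=0$, $V'_\ast:=\{0\}$). A Toom cycle is a height cycle with (i) $\psi_v\ne\psi_w$ for $v\in V'_\ast$, $w\ne v$; (ii) if $\psi_v=\psi_w$ with $v\in V'_s$, $w\in V'_t$, $s,t\in\{1,\circ,2\}$ and $s\le t$ in the order $1<\circ<2$, then $v\le w$. It is rooted at $\psi_0$; $\bar{\mathcal T}_0$ is the set of Toom cycles rooted at $(0,0,0)$. Let $\vec E_1:=\{(v-1,v):\nabla_v=1\}$, $\vec E_2:=\{(v,v-1):\nabla_v=-1\}$. A Toom cycle of length $n\ge2$ is present if (i) $\psi_v\in\Lambda_0$ for $v\in V'_\ast$; (ii) $(\psi_v,\psi_w)\in\vec H_s$ for all $(v,w)\in\vec E_s$ with $v\in V'_s$ ($s=1,2$); (iii) $(\psi_v,\psi_w)\in\vec H_{3-s}$ for all $(v,w)\in\vec E_s$ with $v\in V'_\circ$. A Toom cycle of length $0$ is present if $\psi_0\in\Lambda_0$. *)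

theory Defs
  imports "HOL-Probability.Probability"
begin

type_synonym pt = "int \<times> int \<times> int"

definition padd :: "pt \<Rightarrow> pt \<Rightarrow> pt" where
  "padd a b = (fst a + fst b, fst (snd a) + fst (snd b), snd (snd a) + snd (snd b))"

definition ht :: "pt \<Rightarrow> int" where
  "ht i = - snd (snd i)"

text \<open>Offset sets A_{s,k} (already lifted to third coordinate -1).\<close>
definition Aset :: "nat \<Rightarrow> nat \<Rightarrow> pt set" where
  "Aset s k =
     (if k = 1 then (if s = 1 then {(0,1,-1), (1,0,-1)} else {(-1,1,-1), (0,0,-1), (1,-1,-1)})
      else {(0,0,-1)})"

definition Hs :: "(pt \<Rightarrow> nat) \<Rightarrow> nat \<Rightarrow> (pt \<times> pt) set" where
  "Hs mu s = {(i, padd i j) | i j. mu i \<noteq> 0 \<and> j \<in> Aset s (mu i)}"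

text \<open>A cycle (psi_0,...,psi_n) is represented as the list [psi_0,...,psi_n].\<close>
definition clen :: "pt list \<Rightarrow> nat" where
  "clen ps = length ps - 1"

definition nab :: "pt list \<Rightarrow> nat \<Rightarrow> int" where
  "nab ps v = ht (ps ! v) - ht (ps ! (v - 1))"

definition height_cycle :: "pt list \<Rightarrow> bool" where
  "height_cycle ps \<longleftrightarrow> ps \<noteq> [] \<and> even (clen ps) \<and> ps ! 0 = ps ! clen ps \<and>
     (2 \<le> clen ps \<longrightarrow> nab ps 1 = 1 \<and> nab ps (clen ps) = -1 \<and>
        (\<forall>v. 1 < v \<and> v < clen ps \<longrightarrow> nab ps v \<in> {-1, 1}))"

definition Vstar :: "pt list \<Rightarrow> nat set" where
  "Vstar ps = (if clen ps = 0 then {0}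
     else {v. 0 < v \<and> v < clen ps \<and> nab ps v = 1 \<and> nab ps (v+1) = -1})"

definition Vcirc :: "pt list \<Rightarrow> nat set" where
  "Vcirc ps = {v. 0 < v \<and> v < clen ps \<and> nab ps v = -1 \<and> nab ps (v+1) = 1}"

definition V1 :: "pt list \<Rightarrow> nat set" where
  "V1 ps = {v. 0 < v \<and> v < clen ps \<and> nab ps v = 1 \<and> nab ps (v+1) = 1} \<union> {0}"

definition V2 :: "pt list \<Rightarrow> nat set" where
  "V2 ps = {v. 0 < v \<and> v < clen ps \<and> nab ps v = -1 \<and> nab ps (v+1) = -1} \<union> {clen ps}"

text \<open>Types ordered 1 < circ < 2 encoded as 0 < 1 < 2.\<close>
definition Vtyp :: "pt list \<Rightarrow> nat \<Rightarrow> nat set" where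
  "Vtyp ps k = (if k = 0 then V1 ps else if k = 1 then Vcirc ps else V2 ps)"

definition toom_cycle :: "pt list \<Rightarrow> bool" where
  "toom_cycle ps \<longleftrightarrow> height_cycle ps \<and>
     (\<forall>v \<in> Vstar ps. \<forall>w \<le> clen ps. w \<noteq> v \<longrightarrow> ps ! v \<noteq> ps ! w) \<and>
     (\<forall>s t v w. s \<le> t \<and> t \<le> 2 \<and> v \<in> Vtyp ps s \<and> w \<in> Vtyp ps t \<and> ps ! v = ps ! w
        \<longrightarrow> v \<le> w)"

definition Toom0 :: "pt list set" where
  "Toom0 = {ps. toom_cycle ps \<and> ps ! 0 = (0,0,0)}"

definition Eset :: "pt list \<Rightarrow> nat \<Rightarrow> (nat \<times> nat) set" where
  "Eset ps s = (if s = 1 then {(v - 1, v) | v. 1 \<le> v \<and> v \<le> clen ps \<and> nab ps v = 1}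
                else {(v, v - 1) | v. 1 \<le> v \<and> v \<le> clen ps \<and> nab ps v = -1})"

definition Vs :: "pt list \<Rightarrow> nat \<Rightarrow> nat set" where
  "Vs ps s = (if s = 1 then V1 ps else V2 ps)"

definition present :: "(pt \<Rightarrow> nat) \<Rightarrow> pt list \<Rightarrow> bool" where
  "present mu ps \<longleftrightarrow>
     (if clen ps = 0 then mu (ps ! 0) = 0
      else (\<forall>v \<in> Vstar ps. mu (ps ! v) = 0) \<and>
           (\<forall>s \<in> {1,2}. \<forall>(v, w) \<in> Eset ps s. v \<in> Vs ps s \<longrightarrow> (ps ! v, ps ! w) \<in> Hs mu s) \<and>
           (\<forall>s \<in> {1,2}. \<forall>(v, w) \<in> Eset ps s. v \<in> Vcirc ps \<longrightarrow> (ps ! v, ps ! w) \<in> Hs mu (3 - s)))"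

definition mu_pmf :: "real \<Rightarrow> real \<Rightarrow> nat pmf" where
  "mu_pmf p r = bind_pmf (bernoulli_pmf p)
     (\<lambda>b. if b then return_pmf 0 else map_pmf (\<lambda>c. if c then 1 else 2) (bernoulli_pmf r))"

definition Mpr :: "real \<Rightarrow> real \<Rightarrow> (pt \<Rightarrow> nat) measure" where
  "Mpr p r = PiM UNIV (\<lambda>_. measure_pmf (mu_pmf p r))"

end

theory Submission
  imports Defs "HOL-Real_Asymp.Real_Asymp"
begin

(* Every word w over {-1, 0, 1} with zero sum yields a Toom cycle rooted at the origin: one step
   up to a sink, a descent along type-2 edges of sites of type 1 or 2 that shifts (x, y) by
   (-w_i, w_i) at step i, a turn at a circ vertex of type 1, a straight climb through sites of
   type 2 to a second sink, and back to the origin. Its sites are distinct, so it is present with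
   probability at least ((1-p) r p)^2 ((1-p)^2 (1-r))^M r^k, where M is the length of w and k the
   number of its nonzero letters.
   For words of length 2m, a pigeonhole argument on the sum of the first half together with the
   symmetry w -> -w bounds the total weight of zero-sum words by ((1+2r)^m / (2m+1))^2 from below,
   so the expected number of present Toom cycles is at least ((1-p) r p)^2 B^(2m) / (2m+1)^2 with
   B = (1-p)^2 (1-r) (1+2r). For r <= 1/4 and p <= r/12 we have B > 1, hence it is infinite. *)

lemma toom_cycle_if_simple:
  assumes hc: "height_cycle ps" and n0: "0 < clen ps"
    and inj: "\<And>k l. k < clen ps \<Longrightarrow> l < clen ps \<Longrightarrow> ps ! k = ps ! l \<Longrightarrow> k = l"
  shows "toom_cycle ps"
proof -
  have same_point: "v = w \<or> {v, w} = {0, clen ps}"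
    if "v \<le> clen ps" "w \<le> clen ps" "ps ! v = ps ! w" for v w
  proof -
    define wrap where "wrap u = (if u = clen ps then 0 else u)" for u
    have "ps ! wrap u = ps ! u" for u
      using hc by (simp add: wrap_def height_cycle_def)
    then have "wrap v = wrap w"
      using inj[of "wrap v" "wrap w"] that n0 by (auto simp: wrap_def)
    then show ?thesis
      using n0 by (auto simp: wrap_def split: if_splits)
  qed
  have "ps ! v \<noteq> ps ! w" if "v \<in> Vstar ps" "w \<le> clen ps" "w \<noteq> v" for v w
  proof
    assume "ps ! v = ps ! w"
    moreover have "0 < v" "v < clen ps"
      using that(1) n0 by (auto simp: Vstar_def)
    ultimately show False
      using same_point[of v w] that(2,3) by (auto simp: doubleton_eq_iff)
  qed
  moreover have "v \<le> w"
    if "s \<le> t" "v \<in> Vtyp ps s" "w \<in> Vtyp ps t" "ps ! v = ps ! w" for s t v w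
  proof (rule ccontr)
    assume "\<not> v \<le> w"
    moreover have "v \<le> clen ps" "w \<le> clen ps"
      using that(2,3) by (auto simp: Vtyp_def V1_def V2_def Vcirc_def split: if_splits)
    ultimately have "v = clen ps" "w = 0"
      using same_point[OF _ _ that(4)] by (auto simp: doubleton_eq_iff)
    then show False
      using that(1-3) n0 by (auto simp: Vtyp_def V1_def V2_def Vcirc_def split: if_splits)
  qed
  ultimately show ?thesis
    using hc unfolding toom_cycle_def by blast
qed

subsection \<open>Walk cycles\<close>

(* With M = length w: vertices 1 and 2M+3 are the sinks and M+2 is the circ vertex; vertices
   1..M+1 descend in the plane x + y = 1 along the prefix sums of w, vertices M+2..2M+3 climb
   vertically above (1, -1). *)
definition walk_point :: "int list \<Rightarrow> nat \<Rightarrow> pt" where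
  "walk_point w k =
     (if k = 0 then (0, 0, 0)
      else if k \<le> length w + 1
        then (1 + sum_list (take (k - 1) w), - sum_list (take (k - 1) w), int k - 2)
      else if k \<le> 2 * length w + 3 then (1, -1, 2 * int (length w) + 2 - int k)
      else (0, 0, 0))"

definition walk_cycle :: "int list \<Rightarrow> pt list" where
  "walk_cycle w = map (walk_point w) [0..<2 * length w + 5]"

lemma length_walk_cycle: "length (walk_cycle w) = 2 * length w + 5"
  by (simp add: walk_cycle_def)

lemma clen_walk_cycle [simp]: "clen (walk_cycle w) = 2 * length w + 4"
  by (simp add: clen_def length_walk_cycle)

lemma nth_walk_cycle: "k \<le> 2 * length w + 4 \<Longrightarrow> walk_cycle w ! k = walk_point w k"
  unfolding walk_cycle_def by (subst nth_map) auto

lemma walk_point_last: "walk_point w (2 * length w + 4) = walk_point w 0"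
  by (simp add: walk_point_def)

lemma walk_point_inj:
  "k < 2 * length w + 4 \<Longrightarrow> l < 2 * length w + 4 \<Longrightarrow> walk_point w k = walk_point w l \<Longrightarrow> k = l"
  unfolding walk_point_def by (auto split: if_splits)

lemma nab_walk_cycle:
  assumes "1 \<le> v" "v \<le> 2 * length w + 4"
  shows "nab (walk_cycle w) v =
    (if v = 1 \<or> (length w + 3 \<le> v \<and> v \<le> 2 * length w + 3) then 1 else -1)"
  using assms unfolding nab_def
  by (simp add: nth_walk_cycle walk_point_def ht_def of_nat_diff) presburger

lemma height_cycle_walk_cycle: "height_cycle (walk_cycle w)"
  unfolding height_cycle_def
  by (simp add: nab_walk_cycle nth_walk_cycle walk_point_last) (simp add: walk_cycle_def)

lemma walk_cycle_in_Toom0: "walk_cycle w \<in> Toom0"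
proof -
  have "toom_cycle (walk_cycle w)"
    by (rule toom_cycle_if_simple[OF height_cycle_walk_cycle])
       (auto simp: nth_walk_cycle intro: walk_point_inj)
  then show ?thesis
    by (simp add: Toom0_def nth_walk_cycle walk_point_def)
qed

lemma inj_walk_cycle: "inj walk_cycle"
proof (rule injI)
  fix w w' assume eq: "walk_cycle w = walk_cycle w'"
  have "length (walk_cycle w) = length (walk_cycle w')"
    using eq by simp
  then have len: "length w = length w'"
    by (simp add: length_walk_cycle)
  have prefix: "sum_list (take j w) = sum_list (take j w')" if "j \<le> length w" for j
  proof -
    have "walk_point w (Suc j) = walk_point w' (Suc j)"
      using nth_walk_cycle[of "Suc j" w] nth_walk_cycle[of "Suc j" w'] eq len that by simp
    then show ?thesis
      using that len by (simp add: walk_point_def)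
  qed
  show "w = w'"
  proof (rule nth_equalityI[OF len])
    fix i assume "i < length w"
    then show "w ! i = w' ! i"
      using prefix[of i] prefix[of "Suc i"] len by (simp add: take_Suc_conv_app_nth)
  qed
qed

subsection \<open>Presence of a walk cycle\<close>

definition site_types :: "int list \<Rightarrow> nat \<Rightarrow> nat set" where
  "site_types w k =
     (if k = 0 then {1} else if k = 1 then {0}
      else if k \<le> length w + 1 then (if w ! (k - 2) = 0 then {1, 2} else {1})
      else if k = length w + 2 then {1}
      else if k \<le> 2 * length w + 2 then {2} else {0})"

lemma Vstar_walk_cycle: "v \<in> Vstar (walk_cycle w) \<Longrightarrow> v = 1 \<or> v = 2 * length w + 3"
  unfolding Vstar_def by (auto simp: nab_walk_cycle split: if_splits)

lemma Vcirc_walk_cycle: "v \<in> Vcirc (walk_cycle w) \<Longrightarrow> v = length w + 2"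
  unfolding Vcirc_def by (auto simp: nab_walk_cycle split: if_splits)

lemma V1_walk_cycle:
  "v \<in> V1 (walk_cycle w) \<Longrightarrow> v = 0 \<or> (length w + 3 \<le> v \<and> v \<le> 2 * length w + 2)"
  unfolding V1_def by (auto simp: nab_walk_cycle split: if_splits)

lemma V2_walk_cycle:
  "v \<in> V2 (walk_cycle w) \<Longrightarrow> (2 \<le> v \<and> v \<le> length w + 1) \<or> v = 2 * length w + 4"
  unfolding V2_def by (auto simp: nab_walk_cycle split: if_splits)

lemma Eset1_walk_cycle:
  "(v, u) \<in> Eset (walk_cycle w) 1 \<Longrightarrow>
     u = Suc v \<and> (v = 0 \<or> (length w + 2 \<le> v \<and> v \<le> 2 * length w + 2))"
  unfolding Eset_def by (auto simp: nab_walk_cycle split: if_splits)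

lemma Eset2_walk_cycle:
  "(v, u) \<in> Eset (walk_cycle w) 2 \<Longrightarrow>
     v = Suc u \<and> ((2 \<le> v \<and> v \<le> length w + 2) \<or> v = 2 * length w + 4)"
  unfolding Eset_def by (auto simp: nab_walk_cycle split: if_splits)

lemma Hs_iff: "(a, b) \<in> Hs mu s \<longleftrightarrow> mu a \<noteq> 0 \<and> (\<exists>j \<in> Aset s (mu a). b = padd a j)"
  unfolding Hs_def by blast

lemma walk_descent_edge:
  assumes "2 \<le> u" "u \<le> length w + 1" "set w \<subseteq> {-1, 0, 1}"
    and "mu (walk_point w u) \<in> site_types w u"
  shows "(walk_point w u, walk_point w (u - 1)) \<in> Hs mu 2"
proof -
  define i where "i = u - 2"
  have i: "u = Suc (Suc i)" "i < length w"
    using assms(1,2) by (simp_all add: i_def)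
  let ?h = "sum_list (take i w)"
  have letter: "w ! i \<in> {-1, 0, 1}"
    using assms(3) i(2) nth_mem by blast
  have "walk_point w u = (1 + ?h + w ! i, - ?h - w ! i, int i)"
    using i by (simp add: walk_point_def take_Suc_conv_app_nth)
  moreover have "walk_point w (u - 1) = (1 + ?h, - ?h, int i - 1)"
    using i by (simp add: walk_point_def)
  moreover have "mu (walk_point w u) \<in> (if w ! i = 0 then {1, 2} else {1})"
    using assms(4) i by (simp add: site_types_def)
  ultimately show ?thesis
    using letter by (auto simp: Hs_iff Aset_def padd_def)
qed

lemma present_walk_cycle:
  assumes w: "set w \<subseteq> {-1, 0, 1}" "sum_list w = 0"
    and mu: "\<forall>k < 2 * length w + 4. mu (walk_point w k) \<in> site_types w k"
  shows "present mu (walk_cycle w)"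
proof -
  let ?M = "length w"
  have types: "mu (walk_point w 0) = 1" "mu (walk_point w 1) = 0"
    "mu (walk_point w (?M + 2)) = 1" "mu (walk_point w (2 * ?M + 3)) = 0"
    using mu[rule_format, of 0] mu[rule_format, of 1] mu[rule_format, of "?M + 2"]
      mu[rule_format, of "2 * ?M + 3"]
    by (auto simp: site_types_def)
  have ascent_types: "mu (walk_point w v) = 2" if "?M + 3 \<le> v" "v \<le> 2 * ?M + 2" for v
    using mu[rule_format, of v] that by (simp add: site_types_def)
  have sinks: "\<forall>v \<in> Vstar (walk_cycle w). mu (walk_cycle w ! v) = 0"
    using types by (auto dest: Vstar_walk_cycle simp: nth_walk_cycle)
  have up: "(walk_cycle w ! v, walk_cycle w ! u) \<in> Hs mu 1"
    if edge: "(v, u) \<in> Eset (walk_cycle w) 1" and vtype: "v \<in> V1 (walk_cycle w)" for v u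
    using Eset1_walk_cycle[OF edge] V1_walk_cycle[OF vtype] types ascent_types
    by (auto simp: nth_walk_cycle Hs_iff Aset_def walk_point_def padd_def)
  have down: "(walk_cycle w ! v, walk_cycle w ! u) \<in> Hs mu 2"
    if edge: "(v, u) \<in> Eset (walk_cycle w) 2" and vtype: "v \<in> V2 (walk_cycle w)" for v u
  proof -
    consider "2 \<le> v" "v \<le> ?M + 1" "u = v - 1" | "v = 2 * ?M + 4" "u = 2 * ?M + 3"
      using Eset2_walk_cycle[OF edge] V2_walk_cycle[OF vtype] by force
    then show ?thesis
    proof cases
      case 1
      with walk_descent_edge[OF 1(1,2) w(1)] mu show ?thesis
        by (simp add: nth_walk_cycle)
    qed (use types in \<open>simp add: nth_walk_cycle Hs_iff Aset_def walk_point_def padd_def\<close>)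
  qed
  have turn: "(walk_cycle w ! v, walk_cycle w ! u) \<in> Hs mu (3 - s)"
    if s: "s \<in> {1, 2}" and edge: "(v, u) \<in> Eset (walk_cycle w) s"
      and vtype: "v \<in> Vcirc (walk_cycle w)" for s v u
  proof -
    have v: "v = ?M + 2"
      using Vcirc_walk_cycle[OF vtype] .
    consider "s = 1" "u = ?M + 3" | "s = 2" "u = ?M + 1"
      using s edge v Eset1_walk_cycle[of v u w] Eset2_walk_cycle[of v u w] by auto
    then show ?thesis
      using v types w(2)
      by cases (simp_all add: nth_walk_cycle Hs_iff Aset_def walk_point_def padd_def)
  qed
  show ?thesis
    unfolding present_def Vs_def using sinks up down turn[of 1] turn[of 2] by auto
qed

subsection \<open>Probability of a walk cycle\<close>

definition letter_weight :: "real \<Rightarrow> int \<Rightarrow> real" where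
  "letter_weight r x = (if x = 0 then 1 else r)"

definition word_weight :: "real \<Rightarrow> int list \<Rightarrow> real" where
  "word_weight r w = prod_list (map (letter_weight r) w)"

lemma word_weight_conv_prod: "word_weight r w = (\<Prod>i<length w. letter_weight r (w ! i))"
  unfolding word_weight_def by (induction w) (simp_all add: prod.lessThan_Suc_shift del: prod.lessThan_Suc)

lemma word_weight_Cons [simp]: "word_weight r (x # w) = letter_weight r x * word_weight r w"
  by (simp add: word_weight_def)

lemma word_weight_append: "word_weight r (u @ v) = word_weight r u * word_weight r v"
  by (simp add: word_weight_def)

lemma word_weight_nonneg: "0 \<le> r \<Longrightarrow> 0 \<le> word_weight r w"
  unfolding word_weight_def letter_weight_def by (induction w) auto

lemma word_weight_map_uminus: "word_weight r (map uminus w) = word_weight r w"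
  by (induction w) (auto simp: letter_weight_def)

lemma measurable_coordinate_Mpr: "(\<lambda>mu. mu a) \<in> Mpr p r \<rightarrow>\<^sub>M count_space UNIV"
proof -
  have "(\<lambda>mu. mu a) \<in> Mpr p r \<rightarrow>\<^sub>M measure_pmf (mu_pmf p r)"
    unfolding Mpr_def by (rule measurable_component_singleton) simp
  then show ?thesis
    by (simp cong: measurable_cong_sets)
qed

lemma pred_coordinate_Mpr [measurable]: "Measurable.pred (Mpr p r) (\<lambda>mu. P (mu a))"
  by (rule measurable_compose[OF measurable_coordinate_Mpr]) simp

lemma finite_Eset: "finite (Eset ps s)"
proof (rule finite_subset)
  show "Eset ps s \<subseteq> {..clen ps} \<times> {..clen ps}"
    unfolding Eset_def by auto
qed simp

lemma finite_Vstar: "finite (Vstar ps)"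
  unfolding Vstar_def by auto

lemma pred_present: "Measurable.pred (Mpr p r) (\<lambda>mu. present mu T)"
  unfolding present_def Hs_iff case_prod_beta
  by (measurable; simp add: finite_Eset finite_Vstar)

lemma emeasure_PiM_pmf_cylinder:
  fixes q :: "'b pmf" and f :: "'i \<Rightarrow> 'a"
  assumes "finite K" "inj_on f K"
  shows "emeasure (PiM UNIV (\<lambda>_. measure_pmf q))
      {x \<in> space (PiM UNIV (\<lambda>_. measure_pmf q)). \<forall>k \<in> K. x (f k) \<in> S k}
    = (\<Prod>k\<in>K. emeasure (measure_pmf q) (S k))"
proof -
  let ?M = "\<lambda>_::'a. measure_pmf q"
  let ?S = "\<lambda>i. S (inv_into K f i)"
  have "{x \<in> space (PiM UNIV ?M). \<forall>k \<in> K. x (f k) \<in> S k} = prod_emb UNIV ?M (f ` K) (PiE (f ` K) ?S)"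
    using assms(2) by (auto simp: prod_emb_def PiE_iff inv_into_f_f space_PiM)
  also have "emeasure (PiM UNIV ?M) \<dots> = (\<Prod>i\<in>f ` K. emeasure (measure_pmf q) (?S i))"
    by (rule product_prob_space.emeasure_PiM_emb)
       (auto simp: assms(1) measure_pmf.prob_space_axioms product_prob_space_def
         product_sigma_finite_def product_prob_space_axioms_def prob_space_imp_sigma_finite)
  also have "\<dots> = (\<Prod>k\<in>K. emeasure (measure_pmf q) (S k))"
    using assms(2) by (simp add: prod.reindex inv_into_f_f)
  finally show ?thesis .
qed

lemma pmf_mu_pmf:
  assumes "0 \<le> p" "p \<le> 1" "0 \<le> r" "r \<le> 1"
  shows "pmf (mu_pmf p r) 0 = p" "pmf (mu_pmf p r) 1 = (1 - p) * r"
    "pmf (mu_pmf p r) 2 = (1 - p) * (1 - r)"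
proof -
  have bool_sets: "{x::bool. x} = {True}" "{x::bool. \<not> x} = {False}"
    by auto
  show "pmf (mu_pmf p r) 0 = p" "pmf (mu_pmf p r) 1 = (1 - p) * r"
    "pmf (mu_pmf p r) 2 = (1 - p) * (1 - r)"
    using assms by (simp_all add: mu_pmf_def pmf_bind pmf_map vimage_def bool_sets measure_pmf_single)
qed

lemma prob_site_types:
  assumes "0 \<le> p" "p \<le> 1" "0 \<le> r" "r \<le> 1"
  shows "measure_pmf.prob (mu_pmf p r) (site_types w k) =
    (if k = 0 then (1 - p) * r else if k = 1 then p
     else if k \<le> length w + 1 then (1 - p) * letter_weight r (w ! (k - 2))
     else if k = length w + 2 then (1 - p) * r
     else if k \<le> 2 * length w + 2 then (1 - p) * (1 - r) else p)"
proof -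
  have "pmf (mu_pmf p r) (Suc 0) = (1 - p) * r"
    using pmf_mu_pmf(2)[OF assms] by simp
  then show ?thesis
    using assms pmf_mu_pmf[OF assms] unfolding site_types_def letter_weight_def
    by (simp add: measure_measure_pmf_finite algebra_simps)
qed

lemma prod_walk_segments:
  fixes g :: "nat \<Rightarrow> 'a::comm_monoid_mult"
  shows "(\<Prod>k<2 * M + 4. g k) =
    g 0 * g 1 * (\<Prod>i<M. g (i + 2)) * g (M + 2) * (\<Prod>i<M. g (i + (M + 3))) * g (2 * M + 3)"
proof -
  have split: "prod g {a..<c} = prod g {a..<b} * prod g {b..<c}" if "a \<le> b" "b \<le> c" for a b c
    using that by (simp add: prod.atLeastLessThan_concat)
  have "(\<Prod>k<2 * M + 4. g k) =
      prod g {0..<2} * prod g {2..<M + 2} * prod g {M + 2..<M + 3} * prod g {M + 3..<2 * M + 3}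
      * prod g {2 * M + 3..<2 * M + 4}"
    using split[of 0 2 "2 * M + 4"] split[of 2 "M + 2" "2 * M + 4"]
      split[of "M + 2" "M + 3" "2 * M + 4"] split[of "M + 3" "2 * M + 3" "2 * M + 4"]
    by (simp add: atLeast0LessThan mult.assoc)
  also have "prod g {2..<M + 2} = (\<Prod>i<M. g (i + 2))"
    using prod.shift_bounds_nat_ivl[of g 0 2 M] by (simp only: add_0 atLeast0LessThan)
  also have "prod g {M + 3..<2 * M + 3} = (\<Prod>i<M. g (i + (M + 3)))"
    using prod.shift_bounds_nat_ivl[of g 0 "M + 3" M] by (simp only: add_0 atLeast0LessThan mult_2 add_ac)
  finally show ?thesis
    by (simp add: numeral_2_eq_2 numeral_3_eq_3 numeral_Bit0)
qed

lemma prod_prob_site_types: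
  assumes "0 \<le> p" "p \<le> 1" "0 \<le> r" "r \<le> 1"
  shows "(\<Prod>k<2 * length w + 4. measure_pmf.prob (mu_pmf p r) (site_types w k))
     = ((1 - p) * r * p)^2 * ((1 - p)^2 * (1 - r))^(length w) * word_weight r w"
proof -
  let ?M = "length w"
  have "(\<Prod>i<?M. measure_pmf.prob (mu_pmf p r) (site_types w (i + 2))) = (1 - p)^?M * word_weight r w"
    using assms by (simp add: prob_site_types word_weight_conv_prod prod.distrib)
  moreover have "(\<Prod>i<?M. measure_pmf.prob (mu_pmf p r) (site_types w (i + (?M + 3))))
      = ((1 - p) * (1 - r))^?M"
    using assms by (simp add: prob_site_types)
  ultimately show ?thesis
    unfolding prod_walk_segments using assms
    by (simp add: prob_site_types power_mult_distrib power2_eq_square mult_ac)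
qed

lemma prob_present_walk_cycle:
  assumes p: "0 \<le> p" "p \<le> 1" and r: "0 \<le> r" "r \<le> 1"
    and w: "set w \<subseteq> {-1, 0, 1}" "sum_list w = 0"
  shows "ennreal (((1 - p) * r * p)^2 * ((1 - p)^2 * (1 - r))^(length w) * word_weight r w)
    \<le> emeasure (Mpr p r) {mu \<in> space (Mpr p r). present mu (walk_cycle w)}"
proof -
  let ?K = "{..<2 * length w + 4}"
  have inj: "inj_on (walk_point w) ?K"
    by (auto intro: inj_onI walk_point_inj)
  have "ennreal (((1 - p) * r * p)^2 * ((1 - p)^2 * (1 - r))^(length w) * word_weight r w)
      = (\<Prod>k\<in>?K. emeasure (measure_pmf (mu_pmf p r)) (site_types w k))"
    by (simp add: prod_prob_site_types[OF p r, symmetric] measure_pmf.emeasure_eq_measure prod_ennreal)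
  also have "\<dots> = emeasure (Mpr p r)
      {mu \<in> space (Mpr p r). \<forall>k \<in> ?K. mu (walk_point w k) \<in> site_types w k}"
    unfolding Mpr_def by (rule emeasure_PiM_pmf_cylinder[symmetric]) (simp_all add: inj)
  also have "\<dots> \<le> emeasure (Mpr p r) {mu \<in> space (Mpr p r). present mu (walk_cycle w)}"
  proof (rule emeasure_mono)
    show "{mu \<in> space (Mpr p r). \<forall>k \<in> ?K. mu (walk_point w k) \<in> site_types w k}
        \<subseteq> {mu \<in> space (Mpr p r). present mu (walk_cycle w)}"
      using present_walk_cycle[OF w] by auto
    show "{mu \<in> space (Mpr p r). present mu (walk_cycle w)} \<in> sets (Mpr p r)"
      using pred_present by (simp add: pred_def)
  qed
  finally show ?thesis .
qed

subsection \<open>Counting balanced words\<close>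

definition ternary_words :: "nat \<Rightarrow> int list set" where
  "ternary_words m = {u. set u \<subseteq> {-1, 0, 1} \<and> length u = m}"

definition balanced_words :: "nat \<Rightarrow> int list set" where
  "balanced_words m = {w \<in> ternary_words m. sum_list w = 0}"

definition ternary_weight :: "real \<Rightarrow> nat \<Rightarrow> int \<Rightarrow> real" where
  "ternary_weight r m s = (\<Sum>u \<in> {u \<in> ternary_words m. sum_list u = s}. word_weight r u)"

lemma finite_ternary_words: "finite (ternary_words m)"
  unfolding ternary_words_def by (rule finite_lists_length_eq) simp

lemma finite_balanced_words: "finite (balanced_words m)"
  unfolding balanced_words_def using finite_ternary_words by simp

lemma sum_word_weight_ternary_words: "(\<Sum>u \<in> ternary_words m. word_weight r u) = (1 + 2 * r)^m"
proof (induction m)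
  case 0
  have "ternary_words 0 = {[]}"
    unfolding ternary_words_def by auto
  then show ?case
    by (simp add: word_weight_def)
next
  case (Suc m)
  have words: "ternary_words (Suc m) = (\<lambda>(u, x). x # u) ` (ternary_words m \<times> {-1, 0, 1})"
    unfolding ternary_words_def by (rule lists_length_Suc_eq)
  have inj: "inj_on (\<lambda>(u, x). x # u) (ternary_words m \<times> {-1, 0, 1 :: int})"
    by (rule inj_onI) auto
  have "(\<Sum>u \<in> ternary_words (Suc m). word_weight r u)
      = (\<Sum>(u, x) \<in> ternary_words m \<times> {-1, 0, 1}. letter_weight r x * word_weight r u)"
    unfolding words by (subst sum.reindex[OF inj]) (simp add: case_prod_beta)
  also have "\<dots> = (\<Sum>u \<in> ternary_words m. word_weight r u) * (\<Sum>x \<in> {-1, 0, 1}. letter_weight r x)"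
    unfolding sum_product sum.cartesian_product by (intro sum.cong refl) (auto simp: mult.commute)
  also have "(\<Sum>x \<in> {-1, 0, 1 :: int}. letter_weight r x) = 1 + 2 * r"
    by (simp add: letter_weight_def)
  finally show ?case
    using Suc by simp
qed

lemma sum_ternary_weight: "(\<Sum>s = -int m..int m. ternary_weight r m s) = (1 + 2 * r)^m"
proof -
  have abs_sum_list_le: "\<bar>sum_list u\<bar> \<le> int (length u)" if "set u \<subseteq> {-1, 0, 1}" for u :: "int list"
    using that by (induction u) auto
  have "(\<Sum>s = -int m..int m. ternary_weight r m s) = (\<Sum>u \<in> ternary_words m. word_weight r u)"
    unfolding ternary_weight_def
    by (intro sum.group[OF finite_ternary_words]) (auto simp: ternary_words_def dest!: abs_sum_list_le)
  then show ?thesis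
    by (simp add: sum_word_weight_ternary_words)
qed

lemma ternary_weight_pigeonhole: "\<exists>s. (1 + 2 * r)^m / (2 * real m + 1) \<le> ternary_weight r m s"
proof (rule ccontr)
  assume "\<not> ?thesis"
  then have "(\<Sum>s = -int m..int m. ternary_weight r m s)
      < of_nat (card {-int m..int m}) * ((1 + 2 * r)^m / (2 * real m + 1))"
    by (intro sum_bounded_above_strict) (auto simp: not_le)
  also have "\<dots> = (1 + 2 * r)^m"
    by (simp add: add.commute)
  finally show False
    by (simp add: sum_ternary_weight)
qed

lemma ternary_weight_uminus: "ternary_weight r m (-s) = ternary_weight r m s"
proof -
  have "sum_list (map uminus u) = - sum_list u" for u :: "int list"
    by (induction u) auto
  then show ?thesis
    unfolding ternary_weight_def
    by (intro sum.reindex_bij_witness[of _ "map uminus" "map uminus"])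
       (auto simp: ternary_words_def word_weight_map_uminus)
qed

lemma inj_on_append_fixed_length:
  assumes "\<And>u. u \<in> A \<Longrightarrow> length u = n"
  shows "inj_on (\<lambda>(u, v). u @ v) (A \<times> B)"
  using assms by (intro inj_onI) (clarsimp simp: append_eq_append_conv)

lemma sum_word_weight_balanced_words_ge:
  assumes "0 \<le> r"
  shows "((1 + 2 * r)^m / (2 * real m + 1))^2 \<le> (\<Sum>w \<in> balanced_words (2 * m). word_weight r w)"
proof -
  obtain s where s: "(1 + 2 * r)^m / (2 * real m + 1) \<le> ternary_weight r m s"
    using ternary_weight_pigeonhole by blast
  let ?A = "{u \<in> ternary_words m. sum_list u = s}"
  let ?B = "{u \<in> ternary_words m. sum_list u = -s}"
  let ?concat = "\<lambda>(u, v). u @ v"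
  have inj: "inj_on ?concat (?A \<times> ?B)"
    by (rule inj_on_append_fixed_length) (simp add: ternary_words_def)
  have "((1 + 2 * r)^m / (2 * real m + 1))^2 \<le> (ternary_weight r m s)^2"
    by (rule power_mono[OF s]) (simp add: assms)
  also have "\<dots> = ternary_weight r m s * ternary_weight r m (-s)"
    by (simp add: ternary_weight_uminus power2_eq_square)
  also have "\<dots> = (\<Sum>(u, v) \<in> ?A \<times> ?B. word_weight r (u @ v))"
    unfolding ternary_weight_def sum_product sum.cartesian_product
    by (simp add: word_weight_append case_prod_beta)
  also have "\<dots> = (\<Sum>w \<in> ?concat ` (?A \<times> ?B). word_weight r w)"
    by (subst sum.reindex[OF inj]) (simp add: case_prod_unfold)
  also have "\<dots> \<le> (\<Sum>w \<in> balanced_words (2 * m). word_weight r w)"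
    by (rule sum_mono2[OF finite_balanced_words])
       (auto simp: balanced_words_def ternary_words_def word_weight_nonneg assms)
  finally show ?thesis .
qed

subsection \<open>Divergence\<close>

lemma expected_present_Toom0_ge:
  assumes p: "0 \<le> p" "p \<le> 1" and r: "0 \<le> r" "r \<le> 1"
  shows "ennreal (((1 - p) * r * p)^2 * ((1 - p)^2 * (1 - r))^(2 * m)
      * ((1 + 2 * r)^m / (2 * real m + 1))^2)
    \<le> (\<Sum>\<^sub>\<infinity>T\<in>Toom0. emeasure (Mpr p r) {mu \<in> space (Mpr p r). present mu T})"
proof -
  define f where "f = (\<lambda>T. emeasure (Mpr p r) {mu \<in> space (Mpr p r). present mu T})"
  define K where "K = ((1 - p) * r * p)^2 * ((1 - p)^2 * (1 - r))^(2 * m)"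
  let ?W = "balanced_words (2 * m)"
  have K: "0 \<le> K"
    using p r by (simp add: K_def)
  have "ennreal (K * ((1 + 2 * r)^m / (2 * real m + 1))^2) \<le> ennreal (K * (\<Sum>w \<in> ?W. word_weight r w))"
    using sum_word_weight_balanced_words_ge[OF r(1)] K by (intro ennreal_leI mult_left_mono)
  also have "\<dots> = (\<Sum>w \<in> ?W. ennreal (K * word_weight r w))"
    using K r by (simp add: sum_distrib_left word_weight_nonneg)
  also have "\<dots> \<le> (\<Sum>w \<in> ?W. f (walk_cycle w))"
  proof (rule sum_mono)
    fix w assume "w \<in> ?W"
    then have "set w \<subseteq> {-1, 0, 1}" "sum_list w = 0" "length w = 2 * m"
      by (auto simp: balanced_words_def ternary_words_def)
    then show "ennreal (K * word_weight r w) \<le> f (walk_cycle w)"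
      using prob_present_walk_cycle[OF p r, of w] by (simp add: K_def f_def)
  qed
  also have "\<dots> = sum f (walk_cycle ` ?W)"
    by (simp add: sum.reindex inj_on_subset[OF inj_walk_cycle])
  also have "\<dots> \<le> infsum f Toom0"
    unfolding nonneg_infsum_complete[of Toom0 f, OF zero_le]
    by (rule SUP_upper) (auto simp: finite_balanced_words walk_cycle_in_Toom0)
  finally show ?thesis
    by (simp add: K_def f_def)
qed

lemma ennreal_eq_top_if_above_divergent:
  assumes "\<And>m. ennreal (g m) \<le> x" and "filterlim g at_top sequentially"
  shows "x = \<infinity>"
proof (rule ccontr)
  assume "x \<noteq> \<infinity>"
  then obtain y where y: "x = ennreal y" "0 \<le> y"
    by (cases x) auto
  obtain m where "y < g m"
    using assms(2) unfolding filterlim_at_top_dense eventually_sequentially by blast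
  moreover have "g m \<le> y"
    using assms(1)[of m] y by (simp add: ennreal_le_iff)
  ultimately show False
    by simp
qed

lemma growth_factor_gt_1:
  fixes p r :: real
  assumes r: "0 < r" "r \<le> 1/4" and p: "0 < p" "p \<le> r / 12"
  shows "1 < (1 - p)^2 * (1 - r) * (1 + 2 * r)"
proof -
  have "p * r \<le> r / 12 * (1/4)"
    using p r by (intro mult_mono) auto
  moreover have "(1 - 2 * p) * (1 + r / 2) = 1 + r / 2 - 2 * p - p * r"
    by (simp add: algebra_simps)
  ultimately have "1 < (1 - 2 * p) * (1 + r / 2)"
    using p r by linarith
  also have "\<dots> \<le> (1 - p)^2 * ((1 - r) * (1 + 2 * r))"
  proof (rule mult_mono)
    show "1 - 2 * p \<le> (1 - p)^2"
      by (simp add: power2_eq_square algebra_simps)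
    have "r * r \<le> r * (1/4)"
      using r by (intro mult_left_mono) auto
    then show "1 + r / 2 \<le> (1 - r) * (1 + 2 * r)"
      by (simp add: algebra_simps)
  qed (use p r in auto)
  finally show ?thesis
    by (simp add: mult.assoc)
qed

lemma expected_present_Toom0_infinite:
  assumes r: "0 < r" "r \<le> 1/4" and p: "0 < p" "p \<le> r / 12"
  shows "(\<Sum>\<^sub>\<infinity>T\<in>Toom0. emeasure (Mpr p r) {mu \<in> space (Mpr p r). present mu T}) = \<infinity>"
proof -
  let ?g = "\<lambda>m. ((1 - p) * r * p)^2 * ((1 - p)^2 * (1 - r))^(2 * m)
    * ((1 + 2 * r)^m / (2 * real m + 1))^2"
  define K where "K = ((1 - p) * r * p)^2"
  define B where "B = (1 - p)^2 * (1 - r) * (1 + 2 * r)"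
  have "0 < K" "1 < B"
    using p r growth_factor_gt_1[OF r p] by (simp_all add: K_def B_def)
  then have "filterlim (\<lambda>m. K * (B^(2 * m) / (2 * real m + 1)^2)) at_top sequentially"
    by real_asymp
  moreover have "K * (B^(2 * m) / (2 * real m + 1)^2) = ?g m" for m
  proof -
    have "((1 + 2 * r)^m)^2 = (1 + 2 * r)^(2 * m)"
      by (simp add: power_mult[symmetric] mult.commute)
    then show ?thesis
      by (simp add: K_def B_def power_mult_distrib power_divide)
  qed
  ultimately have "filterlim ?g at_top sequentially"
    by simp
  moreover have "ennreal (?g m)
      \<le> (\<Sum>\<^sub>\<infinity>T\<in>Toom0. emeasure (Mpr p r) {mu \<in> space (Mpr p r). present mu T})" for m
    using r p by (intro expected_present_Toom0_ge) auto
  ultimately show ?thesis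
    by (intro ennreal_eq_top_if_above_divergent)
qed

theorem mainTheorem14:
  shows "\<exists>r'::real. 0 < r' \<and>
    (\<forall>r. 0 < r \<and> r \<le> r' \<and> r \<le> 1 \<longrightarrow>
      (\<exists>p'::real. 0 < p' \<and>
        (\<forall>p. 0 < p \<and> p \<le> p' \<and> p \<le> 1 \<longrightarrow>
          (\<Sum>\<^sub>\<infinity>T\<in>Toom0. emeasure (Mpr p r) {mu \<in> space (Mpr p r). present mu T}) = \<infinity>)))"
proof (rule exI[of _ "1/4"], intro conjI allI impI)
  fix r :: real
  assume r: "0 < r \<and> r \<le> 1/4 \<and> r \<le> 1"
  show "\<exists>p'. 0 < p' \<and> (\<forall>p. 0 < p \<and> p \<le> p' \<and> p \<le> 1 \<longrightarrow>
      (\<Sum>\<^sub>\<infinity>T\<in>Toom0. emeasure (Mpr p r) {mu \<in> space (Mpr p r). present mu T}) = \<infinity>)"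
  proof (rule exI[of _ "r / 12"], intro conjI allI impI)
    fix p :: real
    assume "0 < p \<and> p \<le> r / 12 \<and> p \<le> 1"
    then show "(\<Sum>\<^sub>\<infinity>T\<in>Toom0. emeasure (Mpr p r) {mu \<in> space (Mpr p r). present mu T}) = \<infinity>"
      using r by (intro expected_present_Toom0_infinite) auto
  qed (use r in simp)
qed simp

end
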